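(* Suppose that $\Sigma=(X,U,F)$ is a system, $Q\subset X$ is controlled invariant, and $(\mathcal{A},G)$ is a quasi-invariant-partition of $Q$. Then \[h_{inv}(\mathcal{A},G)=\lim_{m\to\infty}\frac1m\max_{\alpha\in W_m(\mathcal{A},G)}\sum_{i=0}^{m-2}w(\alpha(i)).\]
   Context: A system is a triple $\Sigma=(X,U,F)$ where $X,U$ are nonempty sets and $F:X\times U\rightrightarrows X$ is a set-valued map with $F(x,u)\neq\emptyset$ for all $(x,u)$; for $A\subset X$, $F(A,u)=\bigcup_{x\in A}F(x,u)$. $Q\subset X$ is controlled invariant if for every $x\in Q$ there is $u\in U$ with $F(x,u)\subset Q$. An invariant cover of $Q$ is a pair $(\mathcal{A},G)$ where $\mathcal{A}$ is a finite cover of $Q$ (by subsets of $Q$) and $G:\mathcal{A}\to U$ satisfies $F(A,G(A))\subset Q$ for all $A\in\mathcal{A}$. For $\mathcal{S}\subset\mathcal{A}^n$, $\alpha=\alpha(0)\cdots\alpha(n-1)\in\mathcal{S}$ and integer $0\le t<n-1$, let $P(\alpha|_{[0,t]})=\{A\in\mathcal{A}:\exists\hat\alpha\in\mathcal{S},\ \hat\alpha|_{[0,t]}=\alpha|_{[0,t]},\ A=\hat\alpha(t+1)\}$, and $P(\alpha|_{[0,n-1]})=P(\alpha)=\{\hat\alpha(0):\hat\alpha\in\mathcal{S}\}$. $\mathcal{S}$ is $(n,Q)$-spanning in $(\mathcal{A},G)$ if (1) the elements of $P(\alpha)$ cover $Q$, and (2) for every $\alpha\in\mathcal{S}$ and $0\le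 t<n-1$, $F(\alpha(t),G(\alpha(t)))\subset\bigcup_{A'\in P(\alpha|_{[0,t]})}A'$. Let $N(\mathcal{S})=\max_{\alpha\in\mathcal{S}}\prod_{t=0}^{n-1}\sharp P(\alpha|_{[0,t]})$, $r_{inv}(n,Q,\mathcal{A},G)=\min\{N(\mathcal{S}):\mathcal{S}\ (n,Q)\text{-spanning in }(\mathcal{A},G)\}$, and $h_{inv}(\mathcal{A},G)=\lim_{n\to\infty}\frac1n\log r_{inv}(n,Q,\mathcal{A},G)$ ($\log$ base $2$). For $A\in\mathcal{A}$: $D(A)=\{A'\in\mathcal{A}:F(A,G(A))\cap A'\neq\emptyset\}$ and $w(A)=\log\sharp D(A)$. $W_m(\mathcal{A},G)$ is the set of sequences $(A_i)_{i=0}^{m-1}$ in $\mathcal{A}$ with $F(A_i,G(A_i))\cap A_{i+1}\neq\emptyset$ for all $0\le i<m-1$. An invariant cover $(\mathcal{A},G)$ is a quasi-invariant-partition of $Q$ if $A\setminus\bigcup_{B\in\mathcal{A},B\neq A}B\neq\emptyset$ for all $A\in\mathcal{A}$, and $F(A,G(A))\cap\big(B\setminus\bigcup_{C\in D(A),C\neq B}C\big)\neq\emptyset$ for all $A\in\mathcal{A}$ and $B\in D(A)$. *)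

theory Defs
  imports Complex_Main
begin

(* A system (X,U,F): X, U are the (nonempty) types 'x, 'u; F : X x U => P(X). *)
definition is_system :: "('x \<Rightarrow> 'u \<Rightarrow> 'x set) \<Rightarrow> bool" where
  "is_system F \<longleftrightarrow> (\<forall>x u. F x u \<noteq> {})"

definition img :: "('x \<Rightarrow> 'u \<Rightarrow> 'x set) \<Rightarrow> 'x set \<Rightarrow> 'u \<Rightarrow> 'x set" where
  "img F A u = (\<Union>x\<in>A. F x u)"

definition controlled_invariant :: "('x \<Rightarrow> 'u \<Rightarrow> 'x set) \<Rightarrow> 'x set \<Rightarrow> bool" where
  "controlled_invariant F Q \<longleftrightarrow> (\<forall>x\<in>Q. \<exists>u. F x u \<subseteq> Q)"

definition invariant_cover ::
  "('x \<Rightarrow> 'u \<Rightarrow> 'x set) \<Rightarrow> 'x set \<Rightarrow> 'x set set \<Rightarrow> ('x set \<Rightarrow> 'u) \<Rightarrow> bool" where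
  "invariant_cover F Q \<A> G \<longleftrightarrow>
     finite \<A> \<and> (\<forall>A\<in>\<A>. A \<subseteq> Q) \<and> Q \<subseteq> \<Union>\<A> \<and>
     (\<forall>A\<in>\<A>. img F A (G A) \<subseteq> Q)"

(* Sequences alpha in A^n are lists of length n with entries in A;
   alpha(t) = alpha ! t. *)
definition seqs :: "'x set set \<Rightarrow> nat \<Rightarrow> 'x set list set" where
  "seqs \<A> n = {\<alpha>. length \<alpha> = n \<and> set \<alpha> \<subseteq> \<A>}"

(* P(alpha|_[0,t]) for t < n-1, and P(alpha|_[0,n-1]) = P(alpha) = {beta(0) | beta in S} *)
definition Pset :: "'x set list set \<Rightarrow> nat \<Rightarrow> 'x set list \<Rightarrow> nat \<Rightarrow> 'x set set" where
  "Pset S n \<alpha> t =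
     (if t < n - 1
      then {\<beta> ! (t + 1) | \<beta>. \<beta> \<in> S \<and> take (t + 1) \<beta> = take (t + 1) \<alpha>}
      else (\<lambda>\<beta>. \<beta> ! 0) ` S)"

definition spanning ::
  "('x \<Rightarrow> 'u \<Rightarrow> 'x set) \<Rightarrow> 'x set \<Rightarrow> 'x set set \<Rightarrow> ('x set \<Rightarrow> 'u) \<Rightarrow> nat
     \<Rightarrow> 'x set list set \<Rightarrow> bool" where
  "spanning F Q \<A> G n S \<longleftrightarrow>
     S \<subseteq> seqs \<A> n \<and>
     Q \<subseteq> \<Union>((\<lambda>\<beta>. \<beta> ! 0) ` S) \<and>
     (\<forall>\<alpha>\<in>S. \<forall>t. t < n - 1 \<longrightarrow>
        img F (\<alpha> ! t) (G (\<alpha> ! t)) \<subseteq> \<Union>(Pset S n \<alpha> t))"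

(* N(S); convention: 0 for S = {} (only relevant in degenerate cases) *)
definition NS :: "'x set list set \<Rightarrow> nat \<Rightarrow> nat" where
  "NS S n = (if S = {} then 0 else Max ((\<lambda>\<alpha>. \<Prod>t<n. card (Pset S n \<alpha> t)) ` S))"

definition r_inv ::
  "('x \<Rightarrow> 'u \<Rightarrow> 'x set) \<Rightarrow> 'x set \<Rightarrow> nat \<Rightarrow> 'x set set \<Rightarrow> ('x set \<Rightarrow> 'u) \<Rightarrow> nat" where
  "r_inv F Q n \<A> G = Min {NS S n | S. spanning F Q \<A> G n S}"

definition h_inv ::
  "('x \<Rightarrow> 'u \<Rightarrow> 'x set) \<Rightarrow> 'x set \<Rightarrow> 'x set set \<Rightarrow> ('x set \<Rightarrow> 'u) \<Rightarrow> real" where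
  "h_inv F Q \<A> G = lim (\<lambda>n. log 2 (real (r_inv F Q n \<A> G)) / real n)"

definition Dset ::
  "('x \<Rightarrow> 'u \<Rightarrow> 'x set) \<Rightarrow> 'x set set \<Rightarrow> ('x set \<Rightarrow> 'u) \<Rightarrow> 'x set \<Rightarrow> 'x set set" where
  "Dset F \<A> G A = {A'\<in>\<A>. img F A (G A) \<inter> A' \<noteq> {}}"

definition wt ::
  "('x \<Rightarrow> 'u \<Rightarrow> 'x set) \<Rightarrow> 'x set set \<Rightarrow> ('x set \<Rightarrow> 'u) \<Rightarrow> 'x set \<Rightarrow> real" where
  "wt F \<A> G A = log 2 (real (card (Dset F \<A> G A)))"

definition Wm ::
  "('x \<Rightarrow> 'u \<Rightarrow> 'x set) \<Rightarrow> 'x set set \<Rightarrow> ('x set \<Rightarrow> 'u) \<Rightarrow> nat \<Rightarrow> 'x set list set" where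
  "Wm F \<A> G m = {\<alpha>. length \<alpha> = m \<and> set \<alpha> \<subseteq> \<A> \<and>
     (\<forall>i. i + 1 < m \<longrightarrow> img F (\<alpha> ! i) (G (\<alpha> ! i)) \<inter> \<alpha> ! (i + 1) \<noteq> {})}"

definition quasi_invariant_partition ::
  "('x \<Rightarrow> 'u \<Rightarrow> 'x set) \<Rightarrow> 'x set \<Rightarrow> 'x set set \<Rightarrow> ('x set \<Rightarrow> 'u) \<Rightarrow> bool" where
  "quasi_invariant_partition F Q \<A> G \<longleftrightarrow>
     invariant_cover F Q \<A> G \<and>
     (\<forall>A\<in>\<A>. A - \<Union>(\<A> - {A}) \<noteq> {}) \<and>
     (\<forall>A\<in>\<A>. \<forall>B\<in>Dset F \<A> G A.
        img F A (G A) \<inter> (B - \<Union>(Dset F \<A> G A - {B})) \<noteq> {})"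

(* (1/m) max_{alpha in W_m} sum_{i=0}^{m-2} w(alpha(i)); convention 0 if W_m = {} *)
definition rhs_seq ::
  "('x \<Rightarrow> 'u \<Rightarrow> 'x set) \<Rightarrow> 'x set set \<Rightarrow> ('x set \<Rightarrow> 'u) \<Rightarrow> nat \<Rightarrow> real" where
  "rhs_seq F \<A> G m =
     (if Wm F \<A> G m = {} then 0
      else Max ((\<lambda>\<alpha>. \<Sum>i<m - 1. wt F \<A> G (\<alpha> ! i)) ` Wm F \<A> G m)) / real m"

end

theory Submission
  imports Defs
begin

(* Idea: private points leave a spanning family no freedom. A subfamily of cells covering Q is
   the whole partition, and a subfamily covering F(A,G(A)) contains D(A). Hence every
   (n,Q)-spanning S contains all admissible sequences W_n and has P(alpha|[0,t]) containing
   D(alpha(t)), while W_n itself is spanning with equality. So r_inv(n) is the number of cells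
   times the maximum over W_n of prod_{t<n-1} #D(alpha(t)), whose logarithm is the maximal weight
   sum of the theorem. Splitting an admissible sequence in two shows that this logarithm is
   subadditive up to the constant log max_A #D(A), and Fekete's lemma gives the limit. *)

lemma subadditive_le_mult_add:
  fixes a :: "nat \<Rightarrow> real"
  assumes subadd: "\<And>m n. a (m + n) \<le> a m + a n"
  shows "a (q * k + r) \<le> real q * a k + a r"
proof (induction q)
  case (Suc q)
  have "a (Suc q * k + r) = a (k + (q * k + r))" by (simp add: algebra_simps)
  also have "\<dots> \<le> a k + (real q * a k + a r)" using subadd Suc by (meson add_left_mono order_trans)
  finally show ?case by (simp add: algebra_simps)
qed simp

lemma fekete_subadditive:
  fixes a :: "nat \<Rightarrow> real"
  assumes subadd: "\<And>m n. a (m + n) \<le> a m + a n" and nonneg: "\<And>n. 0 \<le> a n"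
  shows "(\<lambda>n. a n / real n) \<longlonglongrightarrow> (INF n\<in>{1..}. a n / real n)"
    (is "_ \<longlonglongrightarrow> ?L")
proof (rule LIMSEQ_I)
  have bdd: "bdd_below ((\<lambda>n. a n / real n) ` {1..})"
    using nonneg by (intro bdd_belowI[of _ 0]) auto
  fix r :: real assume r: "0 < r"
  obtain k where k: "1 \<le> k" "a k / real k < ?L + r / 2"
    using cINF_less_iff[OF _ bdd, of "?L + r / 2"] r by auto
  define B where "B = Max (a ` {..<k})"
  have B: "a j \<le> B" if "j < k" for j
    unfolding B_def using that by simp
  obtain N :: nat where N: "2 * B / r < N" using reals_Archimedean2 by blast
  have "\<bar>a n / real n - ?L\<bar> < r" if n: "Suc N \<le> n" for n
  proof -
    have n_pos: "0 < real n" using n by simp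
    have "a n \<le> real (n div k) * a k + a (n mod k)"
      using subadditive_le_mult_add[of a, OF subadd, of "n div k" k "n mod k"] by simp
    also have "\<dots> \<le> real n / real k * a k + B"
      using B[of "n mod k"] k nonneg[of k] of_nat_div_le_of_nat[of n k]
      by (intro add_mono mult_right_mono) auto
    finally have "a n / real n \<le> a k / real k + B / real n"
      using n_pos by (simp add: field_simps)
    moreover have "B / real n < r / 2"
    proof -
      have "2 * B < r * real N" using N r by (simp add: field_simps)
      also have "\<dots> < r * real n" using n r by simp
      finally show ?thesis using n_pos by (simp add: field_simps)
    qed
    moreover have "?L \<le> a n / real n"
      using n bdd by (intro cINF_lower) auto
    ultimately show ?thesis using k(2) by linarith
  qed
  then show "\<exists>N. \<forall>n\<ge>N. norm (a n / real n - ?L) < r" by auto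
qed

lemma log_prod:
  assumes "finite I" and "\<And>i. i \<in> I \<Longrightarrow> 0 < f i"
  shows "log b (\<Prod>i\<in>I. f i) = (\<Sum>i\<in>I. log b (f i))"
proof -
  have "f i \<noteq> 0" if "i \<in> I" for i using assms(2)[OF that] by simp
  then show ?thesis unfolding log_def using assms(1) by (simp add: ln_prod sum_divide_distrib)
qed

lemma prod_list_map_butlast:
  fixes f :: "'a \<Rightarrow> 'b::comm_monoid_mult"
  shows "(\<Prod>x\<leftarrow>butlast xs. f x) = (\<Prod>t<length xs - 1. f (xs ! t))"
proof -
  have "(\<Prod>x\<leftarrow>butlast xs. f x) = (\<Prod>t\<in>{0..<length (butlast xs)}. map f (butlast xs) ! t)"
    unfolding prod.list_conv_set_nth by (simp only: length_map)
  also have "\<dots> = (\<Prod>t<length xs - 1. f (xs ! t))"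
    unfolding atLeast0LessThan by (intro prod.cong) (simp_all add: nth_butlast)
  finally show ?thesis .
qed

lemma Pset_less:
  "t < n - 1 \<Longrightarrow>
     Pset S n \<alpha> t = {\<beta> ! Suc t | \<beta>. \<beta> \<in> S \<and> take (Suc t) \<beta> = take (Suc t) \<alpha>}"
  unfolding Pset_def by simp

lemma Pset_last: "Pset S (Suc m) \<alpha> m = (\<lambda>\<beta>. \<beta> ! 0) ` S"
  unfolding Pset_def by simp

lemma seqs_nth_mem:
  assumes "\<alpha> \<in> seqs \<A> n" and "i < n"
  shows "\<alpha> ! i \<in> \<A>"
proof -
  have "length \<alpha> = n" and "set \<alpha> \<subseteq> \<A>" using assms(1) unfolding seqs_def by simp_all
  then show ?thesis using assms(2) nth_mem[of i \<alpha>] by auto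
qed

lemma finite_seqs: "finite \<A> \<Longrightarrow> finite (seqs \<A> n)"
  unfolding seqs_def using finite_lists_length_eq by (simp add: conj_commute)

lemma finite_NS_spanning:
  assumes "finite \<A>"
  shows "finite {NS S n | S. spanning F Q \<A> G n S}"
proof -
  have "finite (seqs \<A> n)" using finite_seqs[OF assms] .
  moreover have "{NS S n | S. spanning F Q \<A> G n S} \<subseteq> (\<lambda>S. NS S n) ` Pow (seqs \<A> n)"
    unfolding spanning_def by auto
  ultimately show ?thesis by (meson finite_Pow_iff finite_imageI finite_subset)
qed

lemma r_inv_eqI:
  assumes "finite \<A>" and "spanning F Q \<A> G n S\<^sub>0"
    and "\<And>S. spanning F Q \<A> G n S \<Longrightarrow> NS S\<^sub>0 n \<le> NS S n"
  shows "r_inv F Q n \<A> G = NS S\<^sub>0 n"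
  unfolding r_inv_def using assms finite_NS_spanning[OF assms(1)] by (intro Min_eqI) auto

lemma r_inv_empty_family:
  assumes "invariant_cover F Q {} G"
  shows "r_inv F Q n {} G = 0"
proof -
  have "spanning F Q {} G n {}"
    using assms unfolding invariant_cover_def spanning_def by auto
  then show ?thesis
    using r_inv_eqI[of "{}" F Q G n "{}"] by (simp add: NS_def)
qed

lemma rhs_seq_empty_family: "rhs_seq F {} G m = 0"
proof -
  have "Wm F {} G m = {}" if "m \<noteq> 0"
    using that unfolding Wm_def by auto
  then show ?thesis unfolding rhs_seq_def by (cases "m = 0") auto
qed

locale qip_system =
  fixes F :: "'x \<Rightarrow> 'u \<Rightarrow> 'x set" and Q :: "'x set"
    and \<A> :: "'x set set" and G :: "'x set \<Rightarrow> 'u"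
  assumes system: "is_system F"
    and partition: "quasi_invariant_partition F Q \<A> G"
    and family_nonempty: "\<A> \<noteq> {}"
begin

abbreviation "D \<equiv> Dset F \<A> G"
abbreviation "W \<equiv> Wm F \<A> G"
abbreviation "post A \<equiv> img F A (G A)"

lemma finite_family: "finite \<A>"
  and family_subset: "A \<in> \<A> \<Longrightarrow> A \<subseteq> Q"
  and covers: "Q \<subseteq> \<Union>\<A>"
  and post_subset: "A \<in> \<A> \<Longrightarrow> post A \<subseteq> Q"
  using partition unfolding quasi_invariant_partition_def invariant_cover_def by auto

lemma private_point: "A \<in> \<A> \<Longrightarrow> A - \<Union>(\<A> - {A}) \<noteq> {}"
  and private_successor_point: "A \<in> \<A> \<Longrightarrow> B \<in> D A \<Longrightarrow> post A \<inter> (B - \<Union>(D A - {B})) \<noteq> {}"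
  using partition unfolding quasi_invariant_partition_def by simp_all

lemma subcover_eq:
  assumes "\<C> \<subseteq> \<A>" and "Q \<subseteq> \<Union>\<C>"
  shows "\<C> = \<A>"
proof
  show "\<C> \<subseteq> \<A>" by (rule assms(1))
  show "\<A> \<subseteq> \<C>"
  proof
    fix A assume A: "A \<in> \<A>"
    then obtain x where x: "x \<in> A" "x \<notin> \<Union>(\<A> - {A})"
      using private_point by blast
    then obtain C where "C \<in> \<C>" "x \<in> C" using family_subset[OF A] assms(2) by blast
    then show "A \<in> \<C>" using x assms(1) by blast
  qed
qed

lemma Dset_subset_cover_of_post:
  assumes "A \<in> \<A>" and "\<P> \<subseteq> \<A>" and "post A \<subseteq> \<Union>\<P>"
  shows "D A \<subseteq> \<P>"
proof
  fix B assume B: "B \<in> D A"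
  then obtain y where y: "y \<in> post A" "y \<in> B" "y \<notin> \<Union>(D A - {B})"
    using private_successor_point[OF assms(1) B] by blast
  then obtain C where "C \<in> \<P>" "y \<in> C" using assms(3) by blast
  moreover have "C \<in> D A" using calculation y(1) assms(2) unfolding Dset_def by blast
  ultimately show "B \<in> \<P>" using y by blast
qed

lemma post_subset_Union_Dset: "A \<in> \<A> \<Longrightarrow> post A \<subseteq> \<Union>(D A)"
  using post_subset covers unfolding Dset_def by blast

lemma Dset_subset: "D A \<subseteq> \<A>"
  unfolding Dset_def by blast

lemma Dset_nonempty:
  assumes "A \<in> \<A>"
  shows "D A \<noteq> {}"
proof -
  obtain x where "x \<in> A"
    using private_point[OF assms] by blast
  moreover have "F x (G A) \<noteq> {}" using system unfolding is_system_def by blast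
  ultimately have "post A \<noteq> {}" unfolding img_def by blast
  then show ?thesis using post_subset_Union_Dset[OF assms] by blast
qed

lemma card_Dset_pos: "A \<in> \<A> \<Longrightarrow> 0 < card (D A)"
  using Dset_nonempty finite_subset[OF Dset_subset finite_family] by (simp add: card_gt_0_iff)

lemma Wm_iff:
  "\<alpha> \<in> W n \<longleftrightarrow> length \<alpha> = n \<and> set \<alpha> \<subseteq> \<A> \<and>
     (\<forall>i. Suc i < n \<longrightarrow> post (\<alpha> ! i) \<inter> \<alpha> ! Suc i \<noteq> {})"
  unfolding Wm_def by simp

lemma finite_Wm: "finite (W n)"
  by (rule finite_subset[OF _ finite_lists_length_eq[OF finite_family, of n]]) (auto simp: Wm_iff)

lemma Wm_length: "\<alpha> \<in> W n \<Longrightarrow> length \<alpha> = n"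
  and Wm_set: "\<alpha> \<in> W n \<Longrightarrow> set \<alpha> \<subseteq> \<A>"
  by (simp_all add: Wm_iff)

lemma Wm_nth_mem: "\<alpha> \<in> W n \<Longrightarrow> i < n \<Longrightarrow> \<alpha> ! i \<in> \<A>"
  using nth_mem by (fastforce simp: Wm_iff)

lemma Wm_Suc_nth_mem_Dset: "\<alpha> \<in> W n \<Longrightarrow> Suc i < n \<Longrightarrow> \<alpha> ! Suc i \<in> D (\<alpha> ! i)"
  using Wm_nth_mem unfolding Dset_def by (auto simp: Wm_iff)

lemma Wm_take: "\<alpha> \<in> W n \<Longrightarrow> k \<le> n \<Longrightarrow> take k \<alpha> \<in> W k"
  by (auto simp: Wm_iff dest: in_set_takeD)

lemma Wm_drop: "\<alpha> \<in> W n \<Longrightarrow> drop k \<alpha> \<in> W (n - k)"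
  by (auto simp: Wm_iff dest: in_set_dropD)

lemma Wm_snoc:
  assumes \<alpha>: "\<alpha> \<in> W n" and n: "0 < n" and B: "B \<in> D (last \<alpha>)"
  shows "\<alpha> @ [B] \<in> W (Suc n)"
  unfolding Wm_iff
proof (intro conjI allI impI)
  have len: "length \<alpha> = n" using Wm_length[OF \<alpha>] .
  show "length (\<alpha> @ [B]) = Suc n" using len by simp
  show "set (\<alpha> @ [B]) \<subseteq> \<A>" using Wm_set[OF \<alpha>] B Dset_subset by auto
  fix i assume i: "Suc i < Suc n"
  show "post ((\<alpha> @ [B]) ! i) \<inter> (\<alpha> @ [B]) ! Suc i \<noteq> {}"
  proof (cases "Suc i < n")
    case True
    then show ?thesis using \<alpha> len by (simp add: Wm_iff nth_append)
  next
    case False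
    then have "i = n - 1" and "\<alpha> \<noteq> []" using i len n by auto
    then have "(\<alpha> @ [B]) ! i = last \<alpha>" and "(\<alpha> @ [B]) ! Suc i = B"
      using len n by (simp_all add: nth_append last_conv_nth)
    then show ?thesis using B unfolding Dset_def by simp
  qed
qed

lemma Wm_extend:
  assumes "\<alpha> \<in> W k" and "0 < k" and "k \<le> n"
  shows "\<exists>\<beta>\<in>W n. take k \<beta> = \<alpha>"
  using assms(3)
proof (induction n rule: dec_induct)
  case base
  show ?case using assms(1) Wm_length[OF assms(1)] by (intro bexI[of _ \<alpha>]) auto
next
  case (step n)
  then obtain \<beta> where \<beta>: "\<beta> \<in> W n" "take k \<beta> = \<alpha>" by blast
  have "\<beta> \<noteq> []" using \<beta>(1) Wm_length step.hyps(1) assms(2) by fastforce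
  then obtain B where "B \<in> D (last \<beta>)"
    using Dset_nonempty Wm_set[OF \<beta>(1)] by (meson all_not_in_conv last_in_set subsetD)
  then have "\<beta> @ [B] \<in> W (Suc n)" using Wm_snoc \<beta>(1) step.hyps(1) assms(2) by simp
  moreover have "take k (\<beta> @ [B]) = \<alpha>" using \<beta> Wm_length step.hyps(1) by simp
  ultimately show ?case by blast
qed

lemma heads_Wm:
  assumes "0 < n"
  shows "(\<lambda>\<beta>. \<beta> ! 0) ` W n = \<A>"
proof
  show "(\<lambda>\<beta>. \<beta> ! 0) ` W n \<subseteq> \<A>" using Wm_nth_mem assms by blast
  show "\<A> \<subseteq> (\<lambda>\<beta>. \<beta> ! 0) ` W n"
  proof
    fix A assume "A \<in> \<A>"
    then have "[A] \<in> W 1" by (simp add: Wm_iff)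
    then obtain \<beta> where "\<beta> \<in> W n" "take 1 \<beta> = [A]" using Wm_extend[of "[A]" 1 n] assms by auto
    moreover have "\<beta> ! 0 = take 1 \<beta> ! 0" by simp
    ultimately show "A \<in> (\<lambda>\<beta>. \<beta> ! 0) ` W n" by force
  qed
qed

lemma Wm_nonempty: "W n \<noteq> {}"
proof (cases "n = 0")
  case True
  have "[] \<in> W 0" by (simp add: Wm_iff)
  then show ?thesis using True by blast
next
  case False
  then show ?thesis using heads_Wm[of n] family_nonempty by auto
qed

lemma Pset_Wm:
  assumes \<alpha>: "\<alpha> \<in> W n" and t: "t < n - 1"
  shows "Pset (W n) n \<alpha> t = D (\<alpha> ! t)"
proof (intro equalityI subsetI)
  fix B assume "B \<in> Pset (W n) n \<alpha> t"
  then obtain \<beta> where \<beta>: "\<beta> \<in> W n" and pre: "take (Suc t) \<beta> = take (Suc t) \<alpha>"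
    and B: "B = \<beta> ! Suc t"
    unfolding Pset_less[OF t] by auto
  have "\<beta> ! t = \<alpha> ! t" using nth_take[of t "Suc t" \<beta>] nth_take[of t "Suc t" \<alpha>] pre by simp
  then show "B \<in> D (\<alpha> ! t)" using Wm_Suc_nth_mem_Dset[OF \<beta>, of t] t B by simp
next
  fix B assume B: "B \<in> D (\<alpha> ! t)"
  have t_less: "t < length \<alpha>" using Wm_length[OF \<alpha>] t by simp
  then have len: "length (take (Suc t) \<alpha>) = Suc t" by simp
  have "take (Suc t) \<alpha> \<in> W (Suc t)" using Wm_take[OF \<alpha>] t by simp
  moreover have "last (take (Suc t) \<alpha>) = \<alpha> ! t"
    using t_less by (simp add: take_Suc_conv_app_nth)
  ultimately have "take (Suc t) \<alpha> @ [B] \<in> W (Suc (Suc t))" using Wm_snoc B by simp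
  then obtain \<beta> where \<beta>: "\<beta> \<in> W n" and pre: "take (Suc (Suc t)) \<beta> = take (Suc t) \<alpha> @ [B]"
    using Wm_extend[of _ "Suc (Suc t)" n] t by fastforce
  have "take (Suc t) \<beta> = take (Suc t) (take (Suc (Suc t)) \<beta>)" by simp
  also have "\<dots> = take (Suc t) \<alpha>" using pre len by simp
  finally have prefix: "take (Suc t) \<beta> = take (Suc t) \<alpha>" .
  have "\<beta> ! Suc t = take (Suc (Suc t)) \<beta> ! Suc t" by simp
  also have "\<dots> = B" using pre len by (simp add: nth_append)
  finally show "B \<in> Pset (W n) n \<alpha> t" unfolding Pset_less[OF t] using \<beta> prefix by blast
qed

lemma spanning_Wm:
  assumes "0 < n"
  shows "spanning F Q \<A> G n (W n)"
  unfolding spanning_def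
proof (intro conjI ballI allI impI)
  show "W n \<subseteq> seqs \<A> n" by (auto simp: seqs_def Wm_iff)
  show "Q \<subseteq> \<Union>((\<lambda>\<beta>. \<beta> ! 0) ` W n)" using heads_Wm[OF assms] covers by simp
  fix \<alpha> t assume "\<alpha> \<in> W n" and "t < n - 1"
  then show "post (\<alpha> ! t) \<subseteq> \<Union>(Pset (W n) n \<alpha> t)"
    using Pset_Wm post_subset_Union_Dset Wm_nth_mem by simp
qed

lemma spanningD:
  assumes "spanning F Q \<A> G n S"
  shows "S \<subseteq> seqs \<A> n" and "Q \<subseteq> \<Union>((\<lambda>\<beta>. \<beta> ! 0) ` S)"
    and "\<alpha> \<in> S \<Longrightarrow> t < n - 1 \<Longrightarrow> post (\<alpha> ! t) \<subseteq> \<Union>(Pset S n \<alpha> t)"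
  using assms unfolding spanning_def by auto

lemma Pset_subset_family:
  assumes "S \<subseteq> seqs \<A> n" and "0 < n"
  shows "Pset S n \<alpha> t \<subseteq> \<A>"
proof -
  have "\<beta> ! i \<in> \<A>" if "\<beta> \<in> S" and "i < n" for \<beta> i
    using seqs_nth_mem assms(1) that by blast
  then show ?thesis using assms(2) unfolding Pset_def by auto
qed

lemma heads_spanning:
  assumes "spanning F Q \<A> G n S" and "0 < n"
  shows "(\<lambda>\<beta>. \<beta> ! 0) ` S = \<A>"
proof (rule subcover_eq)
  obtain m where "n = Suc m" using assms(2) gr0_conv_Suc by blast
  then show "(\<lambda>\<beta>. \<beta> ! 0) ` S \<subseteq> \<A>"
    using Pset_subset_family[OF spanningD(1)[OF assms(1)] assms(2)] Pset_last by metis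
qed (rule spanningD(2)[OF assms(1)])

lemma Dset_subset_Pset:
  assumes "spanning F Q \<A> G n S" and "0 < n" and "\<alpha> \<in> S" and "t < n - 1"
  shows "D (\<alpha> ! t) \<subseteq> Pset S n \<alpha> t"
proof (rule Dset_subset_cover_of_post)
  show "\<alpha> ! t \<in> \<A>"
    using spanningD(1)[OF assms(1)] assms(3,4) seqs_nth_mem by fastforce
qed (use assms Pset_subset_family spanningD in auto)

lemma spanning_prefix_extend:
  assumes S: "spanning F Q \<A> G n S" and \<gamma>: "\<gamma> \<in> W n" and t: "Suc t < n"
    and \<beta>: "\<beta> \<in> S" and pre: "take (Suc t) \<beta> = take (Suc t) \<gamma>"
  shows "\<exists>\<beta>'\<in>S. take (Suc (Suc t)) \<beta>' = take (Suc (Suc t)) \<gamma>"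
proof -
  have "\<beta> ! t = \<gamma> ! t" using nth_take[of t "Suc t" \<beta>] nth_take[of t "Suc t" \<gamma>] pre by simp
  then have "\<gamma> ! Suc t \<in> D (\<beta> ! t)" using Wm_Suc_nth_mem_Dset[OF \<gamma> t] by simp
  moreover have n: "0 < n" and t': "t < n - 1" using t by simp_all
  ultimately have "\<gamma> ! Suc t \<in> Pset S n \<beta> t" using Dset_subset_Pset[OF S n \<beta> t'] by blast
  then obtain \<beta>' where \<beta>': "\<beta>' \<in> S" "take (Suc t) \<beta>' = take (Suc t) \<beta>" "\<beta>' ! Suc t = \<gamma> ! Suc t"
    unfolding Pset_less[OF t'] by auto
  moreover have "length \<beta>' = n" using spanningD(1)[OF S] \<beta>'(1) unfolding seqs_def by auto
  ultimately have "take (Suc (Suc t)) \<beta>' = take (Suc (Suc t)) \<gamma>"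
    using pre Wm_length[OF \<gamma>] t by (simp add: take_Suc_conv_app_nth)
  then show ?thesis using \<beta>'(1) by blast
qed

lemma Wm_subset_spanning:
  assumes S: "spanning F Q \<A> G n S" and n: "0 < n"
  shows "W n \<subseteq> S"
proof
  fix \<gamma> assume \<gamma>: "\<gamma> \<in> W n"
  have len_S: "length \<beta> = n" if "\<beta> \<in> S" for \<beta>
    using spanningD(1)[OF S] that unfolding seqs_def by auto
  have "\<exists>\<beta>\<in>S. take (Suc t) \<beta> = take (Suc t) \<gamma>" if "t < n" for t
    using that
  proof (induction t)
    case 0
    obtain \<beta> where \<beta>: "\<beta> \<in> S" "\<beta> ! 0 = \<gamma> ! 0"
      using heads_spanning[OF S n] Wm_nth_mem[OF \<gamma> n] by (metis imageE)
    then have "take 1 \<beta> = take 1 \<gamma>"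
      using len_S[OF \<beta>(1)] Wm_length[OF \<gamma>] n by (simp add: take_Suc_conv_app_nth)
    then show ?case using \<beta>(1) by auto
  next
    case (Suc t)
    then show ?case using spanning_prefix_extend[OF S \<gamma>] by auto
  qed
  from this[of "n - 1"] obtain \<beta> where "\<beta> \<in> S" "take n \<beta> = take n \<gamma>" using n by auto
  then show "\<gamma> \<in> S" using len_S Wm_length[OF \<gamma>] by auto
qed

(* 2 to the power sum_{i<=m-2} w(alpha(i)) for a sequence alpha of length m. *)
definition branch_prod :: "'x set list \<Rightarrow> nat" where
  "branch_prod \<alpha> = (\<Prod>A\<leftarrow>butlast \<alpha>. card (D A))"

lemma branch_prod_conv_nth: "branch_prod \<alpha> = (\<Prod>t<length \<alpha> - 1. card (D (\<alpha> ! t)))"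
  unfolding branch_prod_def by (rule prod_list_map_butlast)

lemma branch_prod_pos:
  assumes "set \<alpha> \<subseteq> \<A>"
  shows "0 < branch_prod \<alpha>"
  unfolding branch_prod_conv_nth
proof (rule prod_pos)
  fix t assume "t \<in> {..<length \<alpha> - 1}"
  then have "\<alpha> ! t \<in> \<A>" using assms nth_mem[of t \<alpha>] by auto
  then show "0 < card (D (\<alpha> ! t))" by (rule card_Dset_pos)
qed

lemma branch_prod_append:
  "xs \<noteq> [] \<Longrightarrow> ys \<noteq> [] \<Longrightarrow>
     branch_prod (xs @ ys) = branch_prod xs * card (D (last xs)) * branch_prod ys"
  unfolding branch_prod_def by (induction xs) (auto simp: butlast_append)

definition max_branch_prod :: "nat \<Rightarrow> nat" where
  "max_branch_prod n = Max (branch_prod ` W n)"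

lemma branch_prod_le_max: "\<alpha> \<in> W n \<Longrightarrow> branch_prod \<alpha> \<le> max_branch_prod n"
  unfolding max_branch_prod_def using finite_Wm by simp

lemma max_branch_prod_attained: "\<exists>\<gamma>\<in>W n. branch_prod \<gamma> = max_branch_prod n"
proof -
  have "Max (branch_prod ` W n) \<in> branch_prod ` W n" using finite_Wm Wm_nonempty by simp
  then show ?thesis unfolding max_branch_prod_def by force
qed

lemma max_branch_prod_pos: "0 < max_branch_prod n"
proof -
  obtain \<gamma> where "\<gamma> \<in> W n" and "branch_prod \<gamma> = max_branch_prod n"
    using max_branch_prod_attained by blast
  then show ?thesis using branch_prod_pos[OF Wm_set] by metis
qed

lemma prod_card_Pset_Wm:
  assumes "\<alpha> \<in> W (Suc m)"
  shows "(\<Prod>t<Suc m. card (Pset (W (Suc m)) (Suc m) \<alpha> t)) = branch_prod \<alpha> * card \<A>"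
proof -
  have "(\<Prod>t<m. card (Pset (W (Suc m)) (Suc m) \<alpha> t)) = (\<Prod>t<m. card (D (\<alpha> ! t)))"
    by (rule prod.cong) (simp_all add: Pset_Wm[OF assms])
  moreover have "branch_prod \<alpha> = (\<Prod>t<m. card (D (\<alpha> ! t)))"
    using Wm_length[OF assms] by (simp add: branch_prod_conv_nth)
  moreover have "Pset (W (Suc m)) (Suc m) \<alpha> m = \<A>"
    using heads_Wm[of "Suc m"] by (simp add: Pset_last)
  ultimately show ?thesis by simp
qed

lemma prod_card_Pset_spanning:
  assumes S: "spanning F Q \<A> G (Suc m) S" and \<gamma>: "\<gamma> \<in> W (Suc m)"
  shows "branch_prod \<gamma> * card \<A> \<le> (\<Prod>t<Suc m. card (Pset S (Suc m) \<gamma> t))"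
proof -
  have \<gamma>_S: "\<gamma> \<in> S" using Wm_subset_spanning[OF S] \<gamma> by blast
  have "card (D (\<gamma> ! t)) \<le> card (Pset S (Suc m) \<gamma> t)" if "t < m" for t
  proof (rule card_mono)
    show "finite (Pset S (Suc m) \<gamma> t)"
      using Pset_subset_family[OF spanningD(1)[OF S]] finite_family finite_subset by blast
    show "D (\<gamma> ! t) \<subseteq> Pset S (Suc m) \<gamma> t"
      using Dset_subset_Pset[OF S _ \<gamma>_S, of t] that by simp
  qed
  then have "(\<Prod>t<m. card (D (\<gamma> ! t))) \<le> (\<Prod>t<m. card (Pset S (Suc m) \<gamma> t))"
    by (intro prod_mono) simp
  moreover have "branch_prod \<gamma> = (\<Prod>t<m. card (D (\<gamma> ! t)))"
    using Wm_length[OF \<gamma>] by (simp add: branch_prod_conv_nth)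
  moreover have "card (Pset S (Suc m) \<gamma> m) = card \<A>"
    using heads_spanning[OF S] by (simp add: Pset_last)
  ultimately show ?thesis by simp
qed

lemma NS_Wm: "NS (W (Suc m)) (Suc m) = max_branch_prod (Suc m) * card \<A>"
proof -
  have "NS (W (Suc m)) (Suc m) = Max ((\<lambda>\<alpha>. branch_prod \<alpha> * card \<A>) ` W (Suc m))"
    unfolding NS_def using Wm_nonempty prod_card_Pset_Wm by (simp cong: image_cong)
  also have "\<dots> = Max (branch_prod ` W (Suc m)) * card \<A>"
    using mono_Max_commute[of "\<lambda>x. x * card \<A>" "branch_prod ` W (Suc m)"] finite_Wm Wm_nonempty
    by (simp add: mono_def image_image)
  finally show ?thesis unfolding max_branch_prod_def .
qed

lemma NS_spanning_ge:
  assumes S: "spanning F Q \<A> G (Suc m) S"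
  shows "max_branch_prod (Suc m) * card \<A> \<le> NS S (Suc m)"
proof -
  obtain \<gamma> where \<gamma>: "\<gamma> \<in> W (Suc m)" and max: "branch_prod \<gamma> = max_branch_prod (Suc m)"
    using max_branch_prod_attained by blast
  have \<gamma>_S: "\<gamma> \<in> S" using Wm_subset_spanning[OF S] \<gamma> by blast
  have "finite S" using spanningD(1)[OF S] finite_seqs[OF finite_family] by (rule finite_subset)
  then have "(\<Prod>t<Suc m. card (Pset S (Suc m) \<gamma> t)) \<le> NS S (Suc m)"
    unfolding NS_def using \<gamma>_S by auto
  then show ?thesis using prod_card_Pset_spanning[OF S \<gamma>] max by simp
qed

lemma r_inv_eq: "r_inv F Q (Suc m) \<A> G = max_branch_prod (Suc m) * card \<A>"
proof -
  have "r_inv F Q (Suc m) \<A> G = NS (W (Suc m)) (Suc m)"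
    by (rule r_inv_eqI[OF finite_family spanning_Wm]) (simp_all add: NS_Wm NS_spanning_ge)
  then show ?thesis by (simp add: NS_Wm)
qed

lemma max_branch_prod_0: "max_branch_prod 0 = 1"
proof -
  have "W 0 = {[]}" by (auto simp: Wm_iff)
  then show ?thesis unfolding max_branch_prod_def branch_prod_def by simp
qed

definition max_branching :: nat where
  "max_branching = Max ((\<lambda>A. card (D A)) ` \<A>)"

lemma card_Dset_le_max_branching: "A \<in> \<A> \<Longrightarrow> card (D A) \<le> max_branching"
  unfolding max_branching_def using finite_family by simp

lemma max_branching_pos: "0 < max_branching"
  using family_nonempty card_Dset_pos card_Dset_le_max_branching
  by (meson all_not_in_conv less_le_trans)

lemma max_branch_prod_add_le:
  "max_branch_prod (m + n) \<le> max_branch_prod m * max_branching * max_branch_prod n"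
proof (cases "m = 0 \<or> n = 0")
  case True
  have "1 \<le> max_branching" "1 \<le> max_branch_prod m" "1 \<le> max_branch_prod n"
    using max_branching_pos max_branch_prod_pos by (simp_all add: Suc_le_eq)
  then show ?thesis using True max_branch_prod_0 by (auto intro: mult_le_mono)
next
  case False
  obtain \<gamma> where \<gamma>: "\<gamma> \<in> W (m + n)" and max: "branch_prod \<gamma> = max_branch_prod (m + n)"
    using max_branch_prod_attained by blast
  have prefix: "take m \<gamma> \<in> W m" and suffix: "drop m \<gamma> \<in> W n"
    using Wm_take[OF \<gamma>] Wm_drop[OF \<gamma>, of m] by simp_all
  then have "take m \<gamma> \<noteq> []" and "drop m \<gamma> \<noteq> []"
    using False Wm_length by fastforce+
  then have "branch_prod \<gamma> =
      branch_prod (take m \<gamma>) * card (D (last (take m \<gamma>))) * branch_prod (drop m \<gamma>)"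
    using branch_prod_append by (metis append_take_drop_id)
  also have "\<dots> \<le> max_branch_prod m * max_branching * max_branch_prod n"
  proof -
    have "last (take m \<gamma>) \<in> \<A>" using Wm_set[OF prefix] last_in_set[OF \<open>take m \<gamma> \<noteq> []\<close>] by blast
    then show ?thesis
      using branch_prod_le_max[OF prefix] branch_prod_le_max[OF suffix] card_Dset_le_max_branching
      by (intro mult_le_mono) auto
  qed
  finally show ?thesis using max by simp
qed

lemma sum_wt_Wm:
  assumes "\<alpha> \<in> W m"
  shows "(\<Sum>i<m - 1. wt F \<A> G (\<alpha> ! i)) = log 2 (branch_prod \<alpha>)"
proof -
  have "0 < real (card (D (\<alpha> ! i)))" if "i \<in> {..<m - 1}" for i
    using card_Dset_pos Wm_nth_mem[OF assms] that by simp
  then show ?thesis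
    unfolding branch_prod_conv_nth Wm_length[OF assms] wt_def of_nat_prod
    using log_prod[of "{..<m - 1}" "\<lambda>i. real (card (D (\<alpha> ! i)))" 2] by simp
qed

lemma rhs_seq_eq: "rhs_seq F \<A> G = (\<lambda>m. log 2 (max_branch_prod m) / m)"
proof
  fix m
  obtain \<gamma> where \<gamma>: "\<gamma> \<in> W m" and max: "branch_prod \<gamma> = max_branch_prod m"
    using max_branch_prod_attained by blast
  have "Max ((\<lambda>\<alpha>. \<Sum>i<m - 1. wt F \<A> G (\<alpha> ! i)) ` W m) = log 2 (max_branch_prod m)"
  proof (rule Max_eqI)
    show "finite ((\<lambda>\<alpha>. \<Sum>i<m - 1. wt F \<A> G (\<alpha> ! i)) ` W m)" using finite_Wm by simp
    show "log 2 (max_branch_prod m) \<in> (\<lambda>\<alpha>. \<Sum>i<m - 1. wt F \<A> G (\<alpha> ! i)) ` W m"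
      using sum_wt_Wm[OF \<gamma>] \<gamma> max by force
  next
    fix y assume "y \<in> (\<lambda>\<alpha>. \<Sum>i<m - 1. wt F \<A> G (\<alpha> ! i)) ` W m"
    then obtain \<alpha> where \<alpha>: "\<alpha> \<in> W m" and y: "y = log 2 (branch_prod \<alpha>)"
      using sum_wt_Wm by auto
    show "y \<le> log 2 (max_branch_prod m)"
      using y branch_prod_le_max[OF \<alpha>] branch_prod_pos[OF Wm_set[OF \<alpha>]] by simp
  qed
  then show "rhs_seq F \<A> G m = log 2 (max_branch_prod m) / m"
    unfolding rhs_seq_def using Wm_nonempty by simp
qed

lemma convergent_log_max_branch_prod: "convergent (\<lambda>n. log 2 (max_branch_prod n) / n)"
proof -
  (* Absorbing one factor max_branching makes log (max_branch_prod n) exactly subadditive. *)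
  define c where "c = real max_branching"
  define a where "a n = log 2 (max_branch_prod n * c)" for n
  have c: "1 \<le> c" using max_branching_pos unfolding c_def by simp
  have p: "1 \<le> real (max_branch_prod n)" for n using max_branch_prod_pos[of n] by simp
  have "a (m + n) \<le> a m + a n" for m n
  proof -
    have "real (max_branch_prod (m + n)) \<le> max_branch_prod m * c * max_branch_prod n"
      unfolding c_def using max_branch_prod_add_le[of m n]
      by (simp only: of_nat_mult [symmetric] of_nat_le_iff)
    then have "max_branch_prod (m + n) * c \<le> max_branch_prod m * c * max_branch_prod n * c"
      using c by (intro mult_right_mono) simp_all
    also have "\<dots> = (max_branch_prod m * c) * (max_branch_prod n * c)" by (simp only: ac_simps)
    finally have "log 2 (max_branch_prod (m + n) * c)
        \<le> log 2 ((max_branch_prod m * c) * (max_branch_prod n * c))"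
      using c p[of "m + n"] by (intro log_mono) simp_all
    then show ?thesis unfolding a_def using c p[of m] p[of n] by (simp add: log_mult)
  qed
  moreover have "0 \<le> a n" for n
    unfolding a_def using mult_mono[OF p[of n] c] by simp
  ultimately have "(\<lambda>n. a n / n - log 2 c / n) \<longlonglongrightarrow> (INF n\<in>{1..}. a n / n) - 0"
    by (intro tendsto_diff fekete_subadditive lim_const_over_n)
  moreover have "a n / n - log 2 c / n = log 2 (max_branch_prod n) / n" for n
    unfolding a_def using c p[of n] by (simp add: log_mult add_divide_distrib)
  ultimately show ?thesis unfolding convergent_def by auto
qed

lemma log_r_inv_tendsto:
  "(\<lambda>n. log 2 (r_inv F Q n \<A> G) / n) \<longlonglongrightarrow> lim (\<lambda>n. log 2 (max_branch_prod n) / n)"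
proof -
  have "(\<lambda>n. log 2 (max_branch_prod n) / n + log 2 (card \<A>) / n)
      \<longlonglongrightarrow> lim (\<lambda>n. log 2 (max_branch_prod n) / n)"
    using tendsto_add[OF convergent_log_max_branch_prod[unfolded convergent_LIMSEQ_iff]
        lim_const_over_n] by simp
  moreover have "\<forall>\<^sub>F n in sequentially.
      log 2 (max_branch_prod n) / n + log 2 (card \<A>) / n = log 2 (r_inv F Q n \<A> G) / n"
    using eventually_gt_at_top[of 0]
  proof (rule eventually_mono)
    fix n :: nat assume "0 < n"
    then obtain m where "n = Suc m" using gr0_conv_Suc by blast
    moreover have "0 < card \<A>" using family_nonempty finite_family by (simp add: card_gt_0_iff)
    ultimately show "log 2 (max_branch_prod n) / n + log 2 (card \<A>) / n
        = log 2 (r_inv F Q n \<A> G) / n"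
      using max_branch_prod_pos[of n] by (simp add: r_inv_eq log_mult add_divide_distrib)
  qed
  ultimately show ?thesis by (rule Lim_transform_eventually)
qed

end

theorem theorem3p1:
  fixes F :: "'x \<Rightarrow> 'u \<Rightarrow> 'x set" and Q :: "'x set"
    and \<A> :: "'x set set" and G :: "'x set \<Rightarrow> 'u"
  assumes "is_system F"
    and "controlled_invariant F Q"
    and "quasi_invariant_partition F Q \<A> G"
  shows "convergent (\<lambda>n. log 2 (real (r_inv F Q n \<A> G)) / real n)
         \<and> rhs_seq F \<A> G \<longlonglongrightarrow> h_inv F Q \<A> G"
proof (cases "\<A> = {}")
  case True
  have cover: "invariant_cover F Q {} G"
    using assms(3) True unfolding quasi_invariant_partition_def by simp
  (* Q is empty, so r_inv vanishes; recall log 2 0 = 0. *)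
  have "(\<lambda>n. log 2 (real (r_inv F Q n \<A> G)) / real n) = (\<lambda>n. 0)"
    using r_inv_empty_family[OF cover] True by (simp add: log_def)
  moreover have "rhs_seq F \<A> G = (\<lambda>n. 0)" using rhs_seq_empty_family True by blast
  ultimately show ?thesis unfolding h_inv_def by (simp add: convergent_const limI)
next
  case False
  interpret qip_system F Q \<A> G using assms(1,3) False by unfold_locales
  have "h_inv F Q \<A> G = lim (\<lambda>n. log 2 (max_branch_prod n) / n)"
    unfolding h_inv_def using log_r_inv_tendsto by (rule limI)
  then show ?thesis
    using log_r_inv_tendsto rhs_seq_eq
      convergent_log_max_branch_prod[unfolded convergent_LIMSEQ_iff]
    unfolding convergent_def by auto
qed

end
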